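(* Let $\mathcal{F}=\mathcal{F}(X)$ be the free group on an alphabet $X$, equipped with a bi-order $\prec$, and let $W$ be a cyclically reduced word in $\mathcal{F}$. Let $A$ be the maximal ascent of $W$, and let $M$ and $m$ be the peak and the low of $W$, respectively. If $A$ is a subword of $W$, then $W\succ 1_\mathcal{F}$ and $M=mA$. Consequently, $W$ has exactly one subword equivalent to $A$, and no subword of $W^{-1}$ is equivalent to $A$. Moreover, if $W=AD$ with $D\neq 1_\mathcal{F}$, then $D$ is a descent.
   Context: Words are over $X^*=X\cup X^{-1}$; a word $y_1\cdots y_n$ is reduced if $y_i\neq y_{i+1}^{-1}$ for all $i$, and cyclically reduced if moreover $y_1\neq y_n^{-1}$. Words are identified with the elements of $\mathcal{F}$ they represent; $1_\mathcal{F}$ is the empty word. A bi-order on $\mathcal{F}$ is a total order invariant under both left and right multiplication. A subword of $W$ is a word $V$ with $W=SVU$ and $|W|=|S|+|V|+|U|$; it is a prefix if $S$ is empty and a suffix if $U$ is empty. Two subwords (in different positions) are equivalent if they have the same spelling. If $W=UV$ with $U$ a prefix, then $VU$ is a cyclic permutation of $W$. $R_W$ denotes the set of cyclic permutations of $W$ and of $W^{-1}$. A word $U$ is an ascent if every (nonempty) prefix and every (nonempty) suffix of $U$ (including $U$ itself) is $\succ 1_\mathcal{F}$, and a descent if every such prefix and suffix is $\prec 1_\mathcal{F}$. The maximal ascent of $W$ is the greatest (with respect to $\prec$) ascent among all subwords of elements of $R_W$. The peak (resp. low) of $W$ is the largest (resp. smallest) prefix of $W$ with respect to $\prec$, where prefixes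 include the empty word and $W$ itself. *)

theory Defs
  imports Main "HOL-Library.Sublist"
begin

text \<open>Letters of X* = X \<union> X^-1: a generator together with a sign (True = x, False = x^-1).
  Words are lists of letters; elements of the free group F(X) are reduced words.\<close>

type_synonym 'a letter = "'a \<times> bool"
type_synonym 'a word = "'a letter list"

definition inv_letter :: "'a letter \<Rightarrow> 'a letter" where
  "inv_letter y = (fst y, \<not> snd y)"

definition reduced :: "'a word \<Rightarrow> bool" where
  "reduced w \<longleftrightarrow> (\<forall>i. Suc i < length w \<longrightarrow> w ! i \<noteq> inv_letter (w ! Suc i))"

definition cyclically_reduced :: "'a word \<Rightarrow> bool" where
  "cyclically_reduced w \<longleftrightarrow> reduced w \<and> (w \<noteq> [] \<longrightarrow> hd w \<noteq> inv_letter (last w))"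

fun reduce :: "'a word \<Rightarrow> 'a word" where
  "reduce [] = []"
| "reduce (x # xs) =
     (case reduce xs of
        [] \<Rightarrow> [x]
      | y # ys \<Rightarrow> (if y = inv_letter x then ys else x # y # ys))"

definition fmult :: "'a word \<Rightarrow> 'a word \<Rightarrow> 'a word" where
  "fmult u v = reduce (u @ v)"

definition finv :: "'a word \<Rightarrow> 'a word" where
  "finv w = rev (map inv_letter w)"

definition biorder :: "('a word \<Rightarrow> 'a word \<Rightarrow> bool) \<Rightarrow> bool" where
  "biorder lt \<longleftrightarrow>
     (\<forall>u. reduced u \<longrightarrow> \<not> lt u u) \<and>
     (\<forall>u v w. reduced u \<and> reduced v \<and> reduced w \<and> lt u v \<and> lt v w \<longrightarrow> lt u w) \<and>
     (\<forall>u v. reduced u \<and> reduced v \<longrightarrow> u = v \<or> lt u v \<or> lt v u) \<and>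
     (\<forall>u v w. reduced u \<and> reduced v \<and> reduced w \<and> lt u v \<longrightarrow>
        lt (fmult w u) (fmult w v) \<and> lt (fmult u w) (fmult v w))"

definition wless :: "('a word \<Rightarrow> 'a word \<Rightarrow> bool) \<Rightarrow> 'a word \<Rightarrow> 'a word \<Rightarrow> bool" where
  "wless lt u v \<longleftrightarrow> lt (reduce u) (reduce v)"

definition wle :: "('a word \<Rightarrow> 'a word \<Rightarrow> bool) \<Rightarrow> 'a word \<Rightarrow> 'a word \<Rightarrow> bool" where
  "wle lt u v \<longleftrightarrow> reduce u = reduce v \<or> lt (reduce u) (reduce v)"

definition in_RW :: "'a word \<Rightarrow> 'a word \<Rightarrow> bool" where
  "in_RW W V \<longleftrightarrow> (\<exists>k. V = rotate k W \<or> V = rotate k (finv W))"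

definition ascent :: "('a word \<Rightarrow> 'a word \<Rightarrow> bool) \<Rightarrow> 'a word \<Rightarrow> bool" where
  "ascent lt U \<longleftrightarrow> U \<noteq> [] \<and>
     (\<forall>P. prefix P U \<and> P \<noteq> [] \<longrightarrow> wless lt [] P) \<and>
     (\<forall>S. suffix S U \<and> S \<noteq> [] \<longrightarrow> wless lt [] S)"

definition descent :: "('a word \<Rightarrow> 'a word \<Rightarrow> bool) \<Rightarrow> 'a word \<Rightarrow> bool" where
  "descent lt U \<longleftrightarrow> U \<noteq> [] \<and>
     (\<forall>P. prefix P U \<and> P \<noteq> [] \<longrightarrow> wless lt P []) \<and>
     (\<forall>S. suffix S U \<and> S \<noteq> [] \<longrightarrow> wless lt S [])"

definition max_ascent :: "('a word \<Rightarrow> 'a word \<Rightarrow> bool) \<Rightarrow> 'a word \<Rightarrow> 'a word \<Rightarrow> bool" where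
  "max_ascent lt W A \<longleftrightarrow>
     ascent lt A \<and> (\<exists>R. in_RW W R \<and> sublist A R) \<and>
     (\<forall>B R. in_RW W R \<and> sublist B R \<and> ascent lt B \<longrightarrow> wle lt B A)"

definition peak :: "('a word \<Rightarrow> 'a word \<Rightarrow> bool) \<Rightarrow> 'a word \<Rightarrow> 'a word \<Rightarrow> bool" where
  "peak lt W M \<longleftrightarrow> prefix M W \<and> (\<forall>P. prefix P W \<longrightarrow> wle lt P M)"

definition low :: "('a word \<Rightarrow> 'a word \<Rightarrow> bool) \<Rightarrow> 'a word \<Rightarrow> 'a word \<Rightarrow> bool" where
  "low lt W m \<longleftrightarrow> prefix m W \<and> (\<forall>P. prefix P W \<longrightarrow> wle lt m P)"

end

theory Submission
  imports Defs
begin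

(*
  Write p k for the prefix of W of length k, read in F. The subword of W between positions
  a \<le> b has value (p a)^-1 p b, and the cyclic subword from a round to b has value
  (p a)^-1 W p b. Since distinct prefixes of a reduced word are distinct in F, the value
  (p a)^-1 p b is strictly below m^-1 M unless a and b are the positions of the low and
  the peak. If the peak preceded the low, the inverse of the descent between them would be
  an ascent of W^-1 above A; so the low comes first and the subword from the low to the peak
  is an ascent. Maximality of A then pins every occurrence of A to exactly this subword, which
  gives M = m A and uniqueness, and an occurrence of A^-1 would give A a value below its own.
  Positivity of W and the descent property of D are proved in the same way: otherwise a
  cyclic subword (or its inverse) would be an ascent in R_W above A.
*)

lemma inv_letter_inv_letter [simp]: "inv_letter (inv_letter x) = x"
  by (simp add: inv_letter_def)

lemma eq_inv_letter_iff: "x = inv_letter y \<longleftrightarrow> y = inv_letter x"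
  by (auto simp: inv_letter_def)

lemma reduced_Nil [simp]: "reduced []"
  by (simp add: reduced_def)

lemma reduced_singleton [simp]: "reduced [x]"
  by (simp add: reduced_def)

lemma reduced_Cons_Cons: "reduced (x # y # ys) \<longleftrightarrow> x \<noteq> inv_letter y \<and> reduced (y # ys)"
proof
  assume r: "reduced (x # y # ys)"
  have "x \<noteq> inv_letter y"
    using r[unfolded reduced_def, rule_format, of 0] by simp
  moreover have "reduced (y # ys)"
    unfolding reduced_def
  proof (intro allI impI)
    fix i
    assume "Suc i < length (y # ys)"
    then show "(y # ys) ! i \<noteq> inv_letter ((y # ys) ! Suc i)"
      using r[unfolded reduced_def, rule_format, of "Suc i"] by simp
  qed
  ultimately show "x \<noteq> inv_letter y \<and> reduced (y # ys)" ..
next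
  assume h: "x \<noteq> inv_letter y \<and> reduced (y # ys)"
  show "reduced (x # y # ys)"
    unfolding reduced_def
  proof (intro allI impI)
    fix i
    assume "Suc i < length (x # y # ys)"
    then show "(x # y # ys) ! i \<noteq> inv_letter ((x # y # ys) ! Suc i)"
      using h[THEN conjunct2, unfolded reduced_def, rule_format, of "i - 1"] h
      by (cases i) auto
  qed
qed

lemma reduced_ConsD: "reduced (x # xs) \<Longrightarrow> reduced xs"
  by (cases xs) (auto simp: reduced_Cons_Cons)

lemma reduced_take: "reduced w \<Longrightarrow> reduced (take k w)"
  unfolding reduced_def by auto

lemma reduced_reduce: "reduced (reduce w)"
proof (induction w)
  case (Cons x xs)
  then show ?case
    by (cases "reduce xs") (auto simp: reduced_Cons_Cons eq_inv_letter_iff dest: reduced_ConsD)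
qed simp

lemma reduce_eq_self: "reduced w \<Longrightarrow> reduce w = w"
proof (induction w)
  case (Cons x xs)
  then have "reduce xs = xs"
    using reduced_ConsD by blast
  with Cons.prems show ?case
    by (cases xs) (auto simp: reduced_Cons_Cons eq_inv_letter_iff)
qed simp

lemma prefixes_distinct:
  assumes "reduced W" "k \<le> length W" "l \<le> length W" "reduce (take k W) = reduce (take l W)"
  shows "k = l"
proof -
  have "take k W = take l W"
    using assms by (simp add: reduce_eq_self reduced_take)
  then show ?thesis
    using assms(2,3) by (metis length_take min.absorb2)
qed

lemma reduce_reduce [simp]: "reduce (reduce w) = reduce w"
  by (rule reduce_eq_self[OF reduced_reduce])

lemma reduce_Cons_inv_letter [simp]: "reduce (x # inv_letter x # xs) = reduce xs"
proof (cases "reduce xs")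
  case (Cons y ys)
  have "reduced (y # ys)"
    using reduced_reduce[of xs] Cons by simp
  show ?thesis
  proof (cases "y = x")
    case True
    with Cons \<open>reduced (y # ys)\<close> show ?thesis
      by (cases ys) (auto simp: reduced_Cons_Cons eq_inv_letter_iff)
  next
    case False
    with Cons show ?thesis
      by (simp add: inv_letter_def)
  qed
qed simp

lemma reduce_inv_letter_Cons [simp]: "reduce (inv_letter x # x # xs) = reduce xs"
  using reduce_Cons_inv_letter[of "inv_letter x"] by simp

lemma reduce_append_cong: "reduce xs = reduce ys \<Longrightarrow> reduce (zs @ xs) = reduce (zs @ ys)"
  by (induction zs) auto

lemma reduce_append_reduce_right: "reduce (xs @ reduce ys) = reduce (xs @ ys)"
  by (rule reduce_append_cong) simp

lemma reduce_append_reduce_left: "reduce (reduce xs @ ys) = reduce (xs @ ys)"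
proof (induction xs)
  case Nil
  show ?case
    using reduce_append_reduce_right[of "[]"] by simp
next
  case (Cons x xs)
  have "reduce (reduce (x # xs) @ ys) = reduce (x # (reduce xs @ ys))"
  proof (cases "reduce xs")
    case Nil
    then show ?thesis
      using reduce_append_reduce_right[of "[x]" ys] by simp
  next
    case (Cons y zs)
    show ?thesis
    proof (cases "y = inv_letter x")
      case True
      then have "reduce (x # (reduce xs @ ys)) = reduce (zs @ ys)"
        using Cons reduce_Cons_inv_letter[of x "zs @ ys"] by simp
      with Cons True show ?thesis
        by simp
    next
      case False
      with Cons show ?thesis
        using reduce_append_reduce_right[of "x # y # zs" ys] by simp
    qed
  qed
  with Cons.IH show ?case
    by simp
qed

lemma fmult_reduce_reduce: "fmult (reduce xs) (reduce ys) = reduce (xs @ ys)"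
  unfolding fmult_def by (simp add: reduce_append_reduce_left reduce_append_reduce_right)

lemma reduce_append_cong_left: "reduce xs = reduce ys \<Longrightarrow> reduce (xs @ zs) = reduce (ys @ zs)"
  by (metis reduce_append_reduce_left)

lemma finv_Nil [simp]: "finv [] = []"
  by (simp add: finv_def)

lemma finv_eq_Nil_iff [simp]: "finv w = [] \<longleftrightarrow> w = []"
  by (simp add: finv_def)

lemma length_finv [simp]: "length (finv w) = length w"
  by (simp add: finv_def)

lemma finv_append [simp]: "finv (u @ v) = finv v @ finv u"
  by (simp add: finv_def)

lemma finv_finv [simp]: "finv (finv w) = w"
  by (simp add: finv_def rev_map comp_def)

lemma reduce_finv_append_cancel [simp]: "reduce (finv w @ w @ u) = reduce u"
proof (induction w arbitrary: u)
  case (Cons x w)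
  have "finv (x # w) @ (x # w) @ u = finv w @ inv_letter x # inv_letter (inv_letter x) # w @ u"
    by (simp add: finv_def)
  then show ?case
    using reduce_append_cong[OF reduce_inv_letter_Cons, of "finv w"] Cons.IH by simp
qed simp

lemma reduce_append_finv_cancel [simp]: "reduce (w @ finv w @ u) = reduce u"
  using reduce_finv_append_cancel[of "finv w" u] by simp

lemma reduce_finv_cong: "reduce x = reduce y \<Longrightarrow> reduce (finv x) = reduce (finv y)"
  by (metis append_Nil2 reduce_append_cong reduce_append_cong_left reduce_finv_append_cancel
      reduce_append_finv_cancel)

lemma prefix_finv_iff: "prefix P (finv X) \<longleftrightarrow> suffix (finv P) X"
  unfolding prefix_def suffix_def by (metis finv_append finv_finv)

lemma suffix_finv_iff: "suffix S (finv X) \<longleftrightarrow> prefix (finv S) X"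
  unfolding prefix_def suffix_def by (metis finv_append finv_finv)

lemma sublist_finv: "sublist X Y \<Longrightarrow> sublist (finv X) (finv Y)"
  unfolding sublist_def by (metis finv_append append.assoc)

lemma sublist_iff_occurrence:
  "sublist A W \<longleftrightarrow> (\<exists>s. s + length A \<le> length W \<and> take (length A) (drop s W) = A)"
proof
  assume "sublist A W"
  then obtain ps ss where "W = ps @ A @ ss"
    unfolding sublist_def by blast
  then show "\<exists>s. s + length A \<le> length W \<and> take (length A) (drop s W) = A"
    by (intro exI[of _ "length ps"]) simp
next
  assume "\<exists>s. s + length A \<le> length W \<and> take (length A) (drop s W) = A"
  then obtain s where "take (length A) (drop s W) = A"
    by blast
  then have "W = take s W @ A @ drop (length A) (drop s W)"
    by (metis append_take_drop_id)
  then show "sublist A W"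
    unfolding sublist_def by blast
qed

lemma sublist_window: "sublist (drop a (take b W)) W"
  by (meson sublist_drop sublist_order.order_trans sublist_take)

lemma reduce_window:
  "a \<le> b \<Longrightarrow> reduce (drop a (take b V)) = reduce (finv (take a V) @ take b V)"
  by (metis append_take_drop_id min.absorb1 reduce_finv_append_cancel take_take)

lemma reduce_cyclic_window: "reduce (drop a W @ take b W) = reduce (finv (take a W) @ W @ take b W)"
  by (metis append.assoc append_take_drop_id reduce_finv_append_cancel)

lemma occurrence_eq_window:
  "take (length A) (drop s W) = A \<Longrightarrow> A = drop s (take (s + length A) W)"
  by (metis add.commute take_drop)

lemma reduce_occurrence:
  "take (length A) (drop s W) = A \<Longrightarrow> reduce A = reduce (finv (take s W) @ take (s + length A) W)"
  by (metis occurrence_eq_window reduce_window le_add1)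

lemma rotate_eq_drop_take: "a \<le> length W \<Longrightarrow> rotate a W = drop a W @ take a W"
  by (cases "a = length W") (simp_all add: rotate_drop_take)

lemma in_RW_self: "in_RW W W"
  unfolding in_RW_def by (metis rotate0 id_apply)

lemma in_RW_finv: "in_RW W (finv W)"
  unfolding in_RW_def by (metis rotate0 id_apply)

lemma in_RW_rotate: "in_RW W (rotate k W)"
  unfolding in_RW_def by blast

lemma in_RW_finv_rotate: "in_RW W (finv (rotate k W))"
proof -
  define r where "r = k mod length W"
  have "finv (rotate k W) = finv (take r W) @ finv (drop r W)"
    by (simp add: rotate_drop_take r_def)
  also have "\<dots> = rotate (length (finv (drop r W))) (finv W)"
    by (metis append_take_drop_id finv_append rotate_append)
  finally show ?thesis
    unfolding in_RW_def by blast
qed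

lemma sublist_rotate_cyclic_window:
  assumes "b \<le> a" "a \<le> length W"
  shows "sublist (drop a W @ take b W) (rotate a W)"
proof -
  have "take a W = take b W @ drop b (take a W)"
    using assms(1) by (metis append_take_drop_id min.absorb1 take_take)
  then show ?thesis
    unfolding rotate_eq_drop_take[OF assms(2)] sublist_def by (metis append.assoc append_Nil)
qed

lemma cyclic_window_eq_window:
  "a \<le> length W \<Longrightarrow> drop a W @ take b W = drop a (take (length W + b) (W @ W))"
  by simp

lemma prefix_window:
  assumes "prefix P (drop a (take b V))" "P \<noteq> []"
  shows "\<exists>k. a < k \<and> k \<le> b \<and> P = drop a (take k V)"
proof -
  obtain Z where Z: "drop a (take b V) = P @ Z"
    using assms(1) prefix_def by blast
  then have "P = take (length P) (drop a (take b V))"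
    by simp
  then have "P = drop a (take (min (length P + a) b) V)"
    by (simp add: take_drop)
  moreover have "a < b"
    using arg_cong[OF Z, of length] assms(2) by (cases P) (auto simp: min_def split: if_splits)
  then have "a < min (length P + a) b"
    using assms(2) by simp
  ultimately show ?thesis
    by (intro exI[of _ "min (length P + a) b"]) simp
qed

lemma suffix_window:
  assumes "suffix S (drop a (take b V))" "S \<noteq> []"
  shows "\<exists>k. a \<le> k \<and> k < b \<and> S = drop k (take b V)"
proof -
  obtain Z where Z: "drop a (take b V) = Z @ S"
    using assms(1) suffix_def by blast
  then have "S = drop (length Z) (drop a (take b V))"
    by simp
  then have "S = drop (length Z + a) (take b V)"
    by simp
  moreover have "length Z + a < b"
    using arg_cong[OF Z, of length] assms(2) by (cases S) (auto simp: min_def split: if_splits)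
  ultimately show ?thesis
    by (intro exI[of _ "length Z + a"]) simp
qed

lemma biorder_converse: "biorder lt \<Longrightarrow> biorder (\<lambda>u v. lt v u)"
  unfolding biorder_def by meson

lemma descent_iff_ascent_converse: "descent lt U \<longleftrightarrow> ascent (\<lambda>u v. lt v u) U"
  by (simp add: ascent_def descent_def wless_def)

locale biordered =
  fixes lt :: "'a word \<Rightarrow> 'a word \<Rightarrow> bool"
  assumes biorder: "biorder lt"
begin

lemma wless_irrefl: "reduce u = reduce v \<Longrightarrow> \<not> wless lt u v"
  using biorder reduced_reduce unfolding biorder_def wless_def by metis

lemma wless_trans: "wless lt u v \<Longrightarrow> wless lt v w \<Longrightarrow> wless lt u w"
  using biorder reduced_reduce unfolding biorder_def wless_def by metis

lemma wless_linear: "reduce u = reduce v \<or> wless lt u v \<or> wless lt v u"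
  using biorder reduced_reduce unfolding biorder_def wless_def by metis

lemma wless_asym: "wless lt u v \<Longrightarrow> \<not> wless lt v u"
  using wless_trans wless_irrefl by blast

lemma wless_cong:
  "reduce u = reduce u' \<Longrightarrow> reduce v = reduce v' \<Longrightarrow> wless lt u v = wless lt u' v'"
  by (simp add: wless_def)

lemma wle_iff_eq_or_wless: "wle lt u v \<longleftrightarrow> reduce u = reduce v \<or> wless lt u v"
  by (simp add: wle_def wless_def)

lemma wle_wless_trans: "wle lt u v \<Longrightarrow> wless lt v w \<Longrightarrow> wless lt u w"
  unfolding wle_iff_eq_or_wless by (metis wless_cong wless_trans)

lemma wless_wle_trans: "wless lt u v \<Longrightarrow> wle lt v w \<Longrightarrow> wless lt u w"
  unfolding wle_iff_eq_or_wless by (metis wless_cong wless_trans)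

lemma wless_append_left: "wless lt u v \<Longrightarrow> wless lt (w @ u) (w @ v)"
  using biorder reduced_reduce unfolding biorder_def wless_def by (metis fmult_reduce_reduce)

lemma wless_append_right: "wless lt u v \<Longrightarrow> wless lt (u @ w) (v @ w)"
  using biorder reduced_reduce unfolding biorder_def wless_def by (metis fmult_reduce_reduce)

lemma wless_append_left_iff: "wless lt (w @ u) (w @ v) \<longleftrightarrow> wless lt u v"
  by (metis wless_append_left wless_asym wless_irrefl wless_linear reduce_append_cong)

lemma wless_append_right_iff: "wless lt (u @ w) (v @ w) \<longleftrightarrow> wless lt u v"
  by (metis wless_append_right wless_asym wless_irrefl wless_linear reduce_append_cong_left)

lemma wle_append_left: "wle lt u v \<Longrightarrow> wle lt (w @ u) (w @ v)"
  unfolding wle_iff_eq_or_wless using reduce_append_cong wless_append_left by blast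

lemma Nil_wless_finv_append_iff: "wless lt [] (finv x @ y) \<longleftrightarrow> wless lt x y"
  using wless_append_left_iff[of x "[]" "finv x @ y"] by (simp add: wless_def)

lemma wless_finv: "wless lt u v \<Longrightarrow> wless lt (finv v) (finv u)"
proof -
  assume "wless lt u v"
  then have "wless lt (finv v @ u @ finv u) (finv v @ v @ finv u)"
    by (simp add: wless_append_left_iff wless_append_right_iff)
  moreover have "reduce (finv v @ u @ finv u) = reduce (finv v)"
    using reduce_append_cong[of "u @ finv u" "[]" "finv v"] reduce_append_finv_cancel[of u "[]"]
    by simp
  ultimately show ?thesis
    by (simp add: wless_def)
qed

lemma finv_append_wless_finv_append:
  assumes "wle lt x x'" and "wle lt y' y" and "wless lt x x' \<or> wless lt y' y"
  shows "wless lt (finv x' @ y') (finv x @ y)"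
proof -
  have le: "wle lt (finv x' @ y') (finv x @ y')"
    using assms(1) reduce_finv_cong reduce_append_cong_left wless_finv wless_append_right
    unfolding wle_iff_eq_or_wless by metis
  have le': "wle lt (finv x @ y') (finv x @ y)"
    using assms(2) wle_append_left by blast
  consider "wless lt (finv x' @ y') (finv x @ y')" | "wless lt (finv x @ y') (finv x @ y)"
    using assms(3) wless_finv wless_append_right wless_append_left by blast
  then show ?thesis
    by cases (use le le' wle_wless_trans wless_wle_trans in blast)+
qed

lemma biordered_converse: "biordered (\<lambda>u v. lt v u)"
  by (rule biordered.intro, rule biorder_converse, rule biorder)

lemma converse_wless: "wless (\<lambda>u v. lt v u) x y \<longleftrightarrow> wless lt y x"
  by (simp add: wless_def)

lemma ascent_finv_if_descent: "descent lt X \<Longrightarrow> ascent lt (finv X)"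
  unfolding ascent_def descent_def prefix_finv_iff suffix_finv_iff
proof (elim conjE, intro conjI allI impI)
  fix P
  assume "\<forall>S. suffix S X \<and> S \<noteq> [] \<longrightarrow> wless lt S []" "suffix (finv P) X \<and> P \<noteq> []"
  then show "wless lt [] P"
    using Nil_wless_finv_append_iff[of "finv P" "[]"] by simp
next
  fix S
  assume "\<forall>P. prefix P X \<and> P \<noteq> [] \<longrightarrow> wless lt P []" "prefix (finv S) X \<and> S \<noteq> []"
  then show "wless lt [] S"
    using Nil_wless_finv_append_iff[of "finv S" "[]"] by simp
qed simp

lemma Nil_wless_window_iff:
  "a \<le> b \<Longrightarrow> wless lt [] (drop a (take b V)) \<longleftrightarrow> wless lt (take a V) (take b V)"
  using wless_cong[OF refl reduce_window] Nil_wless_finv_append_iff by blast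

lemma ascent_window:
  assumes "a < b" "b \<le> length V"
    and "\<And>k. a < k \<Longrightarrow> k \<le> b \<Longrightarrow> wless lt (take a V) (take k V)"
    and "\<And>k. a \<le> k \<Longrightarrow> k < b \<Longrightarrow> wless lt (take k V) (take b V)"
  shows "ascent lt (drop a (take b V))"
  unfolding ascent_def
proof (intro conjI allI impI)
  show "drop a (take b V) \<noteq> []"
    using assms(1,2) by simp
next
  fix P
  assume "prefix P (drop a (take b V)) \<and> P \<noteq> []"
  then obtain k where "a < k" "k \<le> b" "P = drop a (take k V)"
    using prefix_window by blast
  then show "wless lt [] P"
    using assms(3) Nil_wless_window_iff by simp
next
  fix S
  assume "suffix S (drop a (take b V)) \<and> S \<noteq> []"
  then obtain k where "a \<le> k" "k < b" "S = drop k (take b V)"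
    using suffix_window by blast
  then show "wless lt [] S"
    using assms(4) Nil_wless_window_iff by simp
qed

(* The cyclic subword is a subword of W @ W, whose prefixes beyond W are W @ take k W. *)
lemma ascent_cyclic_window:
  assumes "a \<le> length W" "b \<le> length W" "drop a W @ take b W \<noteq> []"
    and "\<And>k. a < k \<Longrightarrow> k \<le> length W \<Longrightarrow> wless lt (take a W) (take k W)"
    and "\<And>k. k \<le> b \<Longrightarrow> wless lt (take a W) (W @ take k W)"
    and "\<And>k. a \<le> k \<Longrightarrow> k < length W \<Longrightarrow> wless lt (take k W) (W @ take b W)"
    and "\<And>k. k < b \<Longrightarrow> wless lt (take k W) (take b W)"
  shows "ascent lt (drop a W @ take b W)"
  unfolding cyclic_window_eq_window[OF assms(1)]
proof (rule ascent_window)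
  show "a < length W + b" "length W + b \<le> length (W @ W)"
    using assms(1-3) by auto
next
  fix k
  assume "a < k" "k \<le> length W + b"
  then show "wless lt (take a (W @ W)) (take k (W @ W))"
    using assms(1) assms(4)[of k] assms(5)[of "k - length W"] by (cases "k \<le> length W") simp_all
next
  fix k
  assume k: "a \<le> k" "k < length W + b"
  show "wless lt (take k (W @ W)) (take (length W + b) (W @ W))"
  proof (cases "k < length W")
    case True
    with assms(6)[of k] k show ?thesis
      by simp
  next
    case False
    then obtain k' where "k = length W + k'"
      using le_Suc_ex not_less by blast
    with k(2) show ?thesis
      using assms(7)[of k'] wless_append_left by simp
  qed
qed

lemma descent_window:
  assumes "a < b" "b \<le> length V"
    and "\<And>k. a < k \<Longrightarrow> k \<le> b \<Longrightarrow> wless lt (take k V) (take a V)"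
    and "\<And>k. a \<le> k \<Longrightarrow> k < b \<Longrightarrow> wless lt (take b V) (take k V)"
  shows "descent lt (drop a (take b V))"
proof -
  interpret converse: biordered "\<lambda>u v. lt v u"
    by (rule biordered_converse)
  show ?thesis
    unfolding descent_iff_ascent_converse using assms
    by (intro converse.ascent_window) (simp_all add: converse_wless)
qed

lemma descent_cyclic_window:
  assumes "a \<le> length W" "b \<le> length W" "drop a W @ take b W \<noteq> []"
    and "\<And>k. a < k \<Longrightarrow> k \<le> length W \<Longrightarrow> wless lt (take k W) (take a W)"
    and "\<And>k. k \<le> b \<Longrightarrow> wless lt (W @ take k W) (take a W)"
    and "\<And>k. a \<le> k \<Longrightarrow> k < length W \<Longrightarrow> wless lt (W @ take b W) (take k W)"
    and "\<And>k. k < b \<Longrightarrow> wless lt (take b W) (take k W)"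
  shows "descent lt (drop a W @ take b W)"
proof -
  interpret converse: biordered "\<lambda>u v. lt v u"
    by (rule biordered_converse)
  show ?thesis
    unfolding descent_iff_ascent_converse using assms
    by (intro converse.ascent_cyclic_window) (simp_all add: converse_wless)
qed

lemma max_ascent_not_wless:
  assumes "max_ascent lt W A" "in_RW W R" "sublist B R" "ascent lt B"
  shows "\<not> wless lt A B"
  using assms wless_asym wless_irrefl unfolding max_ascent_def wle_iff_eq_or_wless by metis

end

locale low_peak_word = biordered +
  fixes W :: "'a word" and i j :: nat
  assumes reduced: "reduced W"
    and i_le: "i \<le> length W" and low: "low lt W (take i W)"
    and j_le: "j \<le> length W" and peak: "peak lt W (take j W)"
begin

lemma low_le: "wle lt (take i W) (take k W)"
  using low take_is_prefix unfolding low_def by blast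

lemma le_peak: "wle lt (take k W) (take j W)"
  using peak take_is_prefix unfolding peak_def by blast

lemma low_less: "k \<le> length W \<Longrightarrow> k \<noteq> i \<Longrightarrow> wless lt (take i W) (take k W)"
  using low_le prefixes_distinct[OF reduced i_le] unfolding wle_iff_eq_or_wless by blast

lemma less_peak: "k \<le> length W \<Longrightarrow> k \<noteq> j \<Longrightarrow> wless lt (take k W) (take j W)"
  using le_peak prefixes_distinct[OF reduced _ j_le] unfolding wle_iff_eq_or_wless by blast

lemma proper_prefix_wless_cases:
  "k < length W \<Longrightarrow> wless lt (take k W) W \<or> wless lt W (take k W)"
  using prefixes_distinct[OF reduced, of k "length W"] wless_linear[of "take k W" W] by auto

lemma window_value_less_low_peak:
  assumes "a \<le> length W" "b \<le> length W" "a \<noteq> i \<or> b \<noteq> j"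
  shows "wless lt (finv (take a W) @ take b W) (finv (take i W) @ take j W)"
  using assms low_less less_peak by (intro finv_append_wless_finv_append low_le le_peak) blast

lemma ascent_low_peak_window: "i < j \<Longrightarrow> ascent lt (drop i (take j W))"
  using j_le by (intro ascent_window low_less less_peak) auto

lemma descent_peak_low_window: "j < i \<Longrightarrow> descent lt (drop j (take i W))"
  using i_le by (intro descent_window low_less less_peak) auto

lemma descent_peak_low_cyclic_window:
  assumes "wless lt W []" "i < j"
  shows "descent lt (drop j W @ take i W)"
proof (rule descent_cyclic_window[OF j_le i_le])
  have "wless lt (W @ take k W) (take k W)" for k
    using wless_append_right[OF assms(1)] by simp
  then show "wless lt (W @ take k W) (take j W)"
    and "wless lt (W @ take i W) (take k W)" for k
    using le_peak low_le wless_wle_trans by blast+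
  show "drop j W @ take i W \<noteq> []"
  proof
    assume "drop j W @ take i W = []"
    then have "j = length W" "i = 0"
      using j_le assms(2) by auto
    then show False
      using low_less[of "length W"] assms wless_asym by simp
  qed
qed (use less_peak low_less i_le in auto)

end

locale max_ascent_subword = low_peak_word +
  fixes A :: "'a word"
  assumes max_ascent: "max_ascent lt W A" and sublist: "sublist A W"
begin

lemma max_ascent_ne_Nil: "A \<noteq> []"
  using max_ascent unfolding max_ascent_def ascent_def by blast

lemma low_less_peak: "i < j"
proof -
  obtain s where s: "s + length A \<le> length W" "take (length A) (drop s W) = A"
    using sublist sublist_iff_occurrence by blast
  have "i \<noteq> j"
  proof
    assume "i = j"
    define k :: nat where "k = (if i = 0 then 1 else 0)"
    have "k \<le> length W" "k \<noteq> i"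
      using s(1) max_ascent_ne_Nil by (cases A) (auto simp: k_def)
    then show False
      using low_less less_peak \<open>i = j\<close> wless_asym by blast
  qed
  moreover have "\<not> j < i"
  proof
    assume "j < i"
    let ?B = "finv (drop j (take i W))"
    have "ascent lt ?B"
      using \<open>j < i\<close> by (intro ascent_finv_if_descent descent_peak_low_window)
    moreover have "sublist ?B (finv W)"
      by (intro sublist_finv sublist_window)
    moreover have "reduce ?B = reduce (finv (take i W) @ take j W)"
      using reduce_finv_cong[OF reduce_window[of j i W]] \<open>j < i\<close> by simp
    then have "wless lt A ?B"
      using window_value_less_low_peak[of s "s + length A"] s \<open>j < i\<close> i_le
        wless_cong[OF reduce_occurrence[OF s(2)]] by simp
    ultimately show False
      using max_ascent_not_wless[OF max_ascent in_RW_finv] by blast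
  qed
  ultimately show ?thesis
    by simp
qed

lemma occurrence_at_low_peak:
  assumes "s + length A \<le> length W" "take (length A) (drop s W) = A"
  shows "s = i \<and> s + length A = j"
proof (rule ccontr)
  assume "\<not> (s = i \<and> s + length A = j)"
  then have "wless lt A (drop i (take j W))"
    using window_value_less_low_peak[of s "s + length A"] assms(1) low_less_peak
      wless_cong[OF reduce_occurrence[OF assms(2)] reduce_window] by simp
  then show False
    using max_ascent_not_wless[OF max_ascent in_RW_self sublist_window]
      ascent_low_peak_window[OF low_less_peak] by blast
qed

lemma max_ascent_eq_low_peak_window: "A = drop i (take j W)"
  and peak_eq_low_add_length: "j = i + length A"
proof -
  obtain s where "s + length A \<le> length W" "take (length A) (drop s W) = A"
    using sublist sublist_iff_occurrence by blast
  with occurrence_at_low_peak show "A = drop i (take j W)" "j = i + length A"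
    by (metis occurrence_eq_window)+
qed

lemma unique_occurrence: "\<exists>!s. s + length A \<le> length W \<and> take (length A) (drop s W) = A"
proof
  show "i + length A \<le> length W \<and> take (length A) (drop i W) = A"
    using max_ascent_eq_low_peak_window peak_eq_low_add_length j_le
    by (simp add: take_drop add.commute)
qed (use occurrence_at_low_peak in blast)

lemma reduce_max_ascent: "reduce A = reduce (finv (take i W) @ take j W)"
  using max_ascent_eq_low_peak_window low_less_peak reduce_window[of i j W] by simp

lemma not_sublist_finv: "\<not> sublist A (finv W)"
proof
  assume "sublist A (finv W)"
  then have "sublist (finv A) W"
    using sublist_finv by fastforce
  then obtain s where s: "s + length A \<le> length W" "take (length A) (drop s W) = finv A"
    using sublist_iff_occurrence[of "finv A" W] by auto
  have reduce_A: "reduce A = reduce (finv (take (s + length A) W) @ take s W)"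
    using reduce_finv_cong[OF reduce_occurrence[of "finv A" s W]] s(2) by simp
  have "s + length A \<noteq> i \<or> s \<noteq> j"
    using peak_eq_low_add_length max_ascent_ne_Nil by auto
  then have "wless lt (finv (take (s + length A) W) @ take s W) (finv (take i W) @ take j W)"
    using s(1) by (intro window_value_less_low_peak) simp_all
  then have "wless lt A A"
    using wless_cong[OF reduce_A reduce_max_ascent] by blast
  then show False
    using wless_irrefl by blast
qed

lemma Nil_wless_word: "wless lt [] W"
proof -
  have "\<not> wless lt W []"
  proof
    assume neg: "wless lt W []"
    let ?B = "finv (drop j W @ take i W)"
    have "ascent lt ?B"
      using neg low_less_peak by (intro ascent_finv_if_descent descent_peak_low_cyclic_window)
    moreover have "sublist ?B (finv (rotate j W))"
      using low_less_peak j_le by (intro sublist_finv sublist_rotate_cyclic_window) simp_all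
    moreover have "wless lt A ?B"
    proof -
      have "wless lt (finv (take i W) @ take j W) (finv (take i W) @ finv W @ take j W)"
        using wless_append_left wless_append_right[OF wless_finv[OF neg], of "take j W"] by simp
      moreover have "reduce ?B = reduce (finv (take i W) @ finv W @ take j W)"
        using reduce_finv_cong[OF reduce_cyclic_window] by simp
      ultimately show ?thesis
        using wless_cong[OF reduce_max_ascent] by blast
    qed
    ultimately show False
      using max_ascent_not_wless[OF max_ascent in_RW_finv_rotate] by blast
  qed
  moreover have "reduce W \<noteq> reduce []"
    using reduce_eq_self[OF reduced] sublist max_ascent_ne_Nil by auto
  ultimately show ?thesis
    using wless_linear by blast
qed

lemma ascent_cyclic_window_from_last_dip:
  assumes "i = 0" "j \<le> l" "l < length W" "wless lt (take l W) W"
    and "\<And>k. l < k \<Longrightarrow> k < length W \<Longrightarrow> wless lt W (take k W)"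
  shows "ascent lt (drop l W @ take j W)"
proof (rule ascent_cyclic_window)
  show "l \<le> length W" "j \<le> length W" "drop l W @ take j W \<noteq> []"
    using assms(3) j_le by simp_all
  show "wless lt (take l W) (take k W)" if "l < k" "k \<le> length W" for k
    using that assms(4,5) wless_trans by (cases "k = length W") auto
  show "wless lt (take l W) (W @ take k W)" for k
  proof -
    have "wle lt W (W @ take k W)"
      using wle_append_left[OF low_le[of k]] assms(1) by simp
    then show ?thesis
      using wless_wle_trans[OF assms(4)] by blast
  qed
  show "wless lt (take k W) (W @ take j W)" for k
  proof -
    have "wless lt (take j W) (W @ take j W)"
      using wless_append_right[OF Nil_wless_word, of "take j W"] by simp
    then show ?thesis
      using wle_wless_trans[OF le_peak] by blast
  qed
  show "wless lt (take k W) (take j W)" if "k < j" for k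
    using that j_le less_peak by simp
qed

lemma wless_prefix_after_peak:
  assumes "i = 0" "j \<le> k" "k < length W"
  shows "wless lt W (take k W)"
proof (rule ccontr)
  assume "\<not> wless lt W (take k W)"
  \<comment> \<open>Take the last position l after the peak with p l < W: the cyclic subword from l
    round to the peak is then an ascent above A.\<close>
  define dip where "dip l \<longleftrightarrow> j \<le> l \<and> l < length W \<and> wless lt (take l W) W" for l
  have "dip k"
    using assms proper_prefix_wless_cases \<open>\<not> wless lt W (take k W)\<close> by (auto simp: dip_def)
  then obtain l where "dip l" and greatest: "\<And>l'. dip l' \<Longrightarrow> l' \<le> l"
    using Nat.ex_has_greatest_nat[of dip k "length W"] by (auto simp: dip_def)
  then have l: "j \<le> l" "l < length W" "wless lt (take l W) W"
    by (auto simp: dip_def)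
  have "wless lt W (take l' W)" if "l < l'" "l' < length W" for l'
    using that l(1) greatest[of l'] proper_prefix_wless_cases[of l'] by (auto simp: dip_def)
  then have "ascent lt (drop l W @ take j W)"
    using assms(1) l by (intro ascent_cyclic_window_from_last_dip)
  moreover have "sublist (drop l W @ take j W) (rotate l W)"
    using l by (intro sublist_rotate_cyclic_window) simp_all
  moreover have "wless lt A (drop l W @ take j W)"
  proof -
    have "wless lt (take j W) (finv (take l W) @ W @ take j W)"
      using wless_append_right[of "[]" "finv (take l W) @ W" "take j W"] l(3)
        Nil_wless_finv_append_iff by simp
    then show ?thesis
      using wless_cong[OF _ reduce_cyclic_window] reduce_max_ascent assms(1) by simp
  qed
  ultimately show False
    using max_ascent_not_wless[OF max_ascent in_RW_rotate] by blast
qed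

lemma descent_of_max_ascent_append:
  assumes "W = A @ D" "D \<noteq> []"
  shows "descent lt D"
proof -
  have "i = 0"
    using occurrence_at_low_peak[of 0] assms(1) by simp
  then have "j = length A"
    using peak_eq_low_add_length by simp
  then have "D = drop j (take (length W) W)"
    using assms(1) by simp
  also have "descent lt \<dots>"
  proof (rule descent_window)
    show "j < length W"
      using assms \<open>j = length A\<close> by simp
  qed (use \<open>i = 0\<close> less_peak wless_prefix_after_peak in auto)
  finally show ?thesis .
qed

end

theorem lemma2p3:
  fixes lt :: "'a word \<Rightarrow> 'a word \<Rightarrow> bool" and W A M m :: "'a word"
  assumes "biorder lt"
    and "cyclically_reduced W"
    and "max_ascent lt W A"
    and "peak lt W M"
    and "low lt W m"
    and "sublist A W"
  shows "wless lt [] W \<and> M = fmult m A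
    \<and> (\<exists>!i. i + length A \<le> length W \<and> take (length A) (drop i W) = A)
    \<and> \<not> sublist A (finv W)
    \<and> (\<forall>D. W = A @ D \<and> D \<noteq> [] \<longrightarrow> descent lt D)"
proof -
  have M: "take (length M) W = M" and m: "take (length m) W = m"
    using assms(4,5) unfolding peak_def low_def by (metis append_eq_conv_conj prefix_def)+
  interpret max_ascent_subword lt W "length m" "length M" A
    using assms M m
    by unfold_locales (auto simp: cyclically_reduced_def peak_def low_def prefix_length_le)
  have "fmult m A = reduce (take (length M) W)"
    using max_ascent_eq_low_peak_window low_less_peak m unfolding fmult_def
    by (metis append_take_drop_id less_imp_le_nat min.absorb1 take_take)
  then have "M = fmult m A"
    using M reduce_eq_self[OF reduced_take[OF reduced], of "length M"] by simp
  then show ?thesis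
    using Nil_wless_word unique_occurrence not_sublist_finv descent_of_max_ascent_append by blast
qed

end
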